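(* Let $\phi\in\,]0,\pi[$, $M\in\mathbb{R}$, $N>0$. Let $\Sigma$ be the Keplerian branch around ${\rm O}$ in the plane ${\rm O}xy$ with equation $r=My+N$. Consider the affine map $(x_1,y_1)\mapsto(x_3,y_3)$ defined by $x_1=x_3-M\frac{\cos\phi}{\sin\phi}y_3-N\cos\phi$, $y_1=\frac{1}{\sin\phi}y_3$. Then the image of $\Sigma$ by this map is the Keplerian branch around ${\rm O}$ with equation $r=x\cos\phi+yM\sin\phi+N\sin^2\phi$.
   Context: In the Euclidean plane ${\rm O}xy$, $r=\sqrt{x^2+y^2}$. A Keplerian branch around ${\rm O}$ is the image of a solution of Newton's system $\ddot q=-q/\|q\|^3$ (extended through collisions by bouncing back along the same ray with the same energy). For $\gamma>0$, the set of points satisfying $r=\alpha x+\beta y+\gamma$ is an (irreducible) Keplerian branch around ${\rm O}$, and every nonrectilinear Keplerian branch is of this form. *)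

theory Defs
  imports Complex_Main
begin

text \<open>For gamma > 0 this is exactly a (nonrectilinear)
  Keplerian branch around O (standing fact from the paper's context).\<close>
definition kepler_curve :: "real \<Rightarrow> real \<Rightarrow> real \<Rightarrow> (real \<times> real) set" where
  "kepler_curve \<alpha> \<beta> \<gamma> = {(x, y). sqrt (x\<^sup>2 + y\<^sup>2) = \<alpha> * x + \<beta> * y + \<gamma>}"

end

theory Submission
  imports Defs
begin

text \<open>Write s = sin phi, c = cos phi and R = M y1 + N, so that the preimage point is
  (x1, y1) = (x3 - c R, y3 / s) and its distance to O must equal R. Clearing the
  denominator and using c^2 + s^2 = 1, the squared equation for (x1, y1) becomes the
  squared equation x3^2 + y3^2 = (c x3 + s^2 R)^2 of the image curve, whose right-hand
  side is R + c (x3 - c R). Since |x3 - c R| = |x1| <= |R| and |c| < 1, the two right-hand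
  sides R and c x3 + s^2 R have the same sign, so the square roots agree as well.\<close>

lemma sqrt_eq_iff_square: "0 \<le> a \<Longrightarrow> sqrt a = b \<longleftrightarrow> 0 \<le> b \<and> a = b\<^sup>2"
  for a b :: real
  by auto

lemma nonneg_perturbation_iff:
  fixes c u R :: real
  assumes "\<bar>c\<bar> < 1" and "\<bar>u\<bar> \<le> \<bar>R\<bar>"
  shows "0 \<le> R + c * u \<longleftrightarrow> 0 \<le> R"
proof -
  have "\<bar>c * u\<bar> \<le> \<bar>c\<bar> * \<bar>R\<bar>"
    using assms by (simp add: abs_mult mult_left_mono)
  moreover have "\<bar>c\<bar> * \<bar>R\<bar> < \<bar>R\<bar>" if "R \<noteq> 0"
    using assms(1) that by simp
  ultimately have "\<bar>c * u\<bar> < \<bar>R\<bar>" if "R \<noteq> 0"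
    using that by linarith
  then show ?thesis
    using assms(2) by (cases "R = 0") (auto simp: abs_less_iff)
qed

lemma sheared_circle_iff:
  fixes s c x y R :: real
  assumes "s \<noteq> 0" and "c\<^sup>2 + s\<^sup>2 = 1"
  shows "(x - c * R)\<^sup>2 + (y / s)\<^sup>2 = R\<^sup>2 \<longleftrightarrow> x\<^sup>2 + y\<^sup>2 = (c * x + s\<^sup>2 * R)\<^sup>2"
proof -
  have "(x - c * R)\<^sup>2 + (y / s)\<^sup>2 = R\<^sup>2 \<longleftrightarrow> s\<^sup>2 * (x - c * R)\<^sup>2 + y\<^sup>2 = s\<^sup>2 * R\<^sup>2"
    using assms(1) by (simp add: field_simps)
  moreover have "(c * x + s\<^sup>2 * R)\<^sup>2 - (x\<^sup>2 + y\<^sup>2)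
      = s\<^sup>2 * R\<^sup>2 - (s\<^sup>2 * (x - c * R)\<^sup>2 + y\<^sup>2) + (c\<^sup>2 + s\<^sup>2 - 1) * (x\<^sup>2 + s\<^sup>2 * R\<^sup>2)"
    by (simp add: power2_eq_square algebra_simps)
  ultimately show ?thesis
    using assms(2) by auto
qed

lemma sheared_distance_eq_iff:
  fixes s c x y R :: real
  assumes s: "s \<noteq> 0" and cs: "c\<^sup>2 + s\<^sup>2 = 1"
  shows "sqrt ((x - c * R)\<^sup>2 + (y / s)\<^sup>2) = R \<longleftrightarrow> sqrt (x\<^sup>2 + y\<^sup>2) = c * x + s\<^sup>2 * R"
proof -
  have same_sign: "0 \<le> c * x + s\<^sup>2 * R \<longleftrightarrow> 0 \<le> R"
    if circle: "(x - c * R)\<^sup>2 + (y / s)\<^sup>2 = R\<^sup>2"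
  proof -
    have "c\<^sup>2 < 1"
      using s cs by (smt (verit) zero_less_power2)
    then have "\<bar>c\<bar> < 1"
      by (simp add: abs_square_less_1)
    moreover have "\<bar>x - c * R\<bar> \<le> \<bar>R\<bar>"
      using circle by (simp add: abs_le_square_iff) (smt (verit) zero_le_power2)
    moreover have "c * x + s\<^sup>2 * R = R + c * (x - c * R)"
      using cs by (simp add: algebra_simps power2_eq_square flip: distrib_left)
    ultimately show ?thesis
      using nonneg_perturbation_iff by presburger
  qed
  have "sqrt ((x - c * R)\<^sup>2 + (y / s)\<^sup>2) = R \<longleftrightarrow> 0 \<le> R \<and> (x - c * R)\<^sup>2 + (y / s)\<^sup>2 = R\<^sup>2"
    by (rule sqrt_eq_iff_square) simp
  also have "\<dots> \<longleftrightarrow> 0 \<le> c * x + s\<^sup>2 * R \<and> x\<^sup>2 + y\<^sup>2 = (c * x + s\<^sup>2 * R)\<^sup>2"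
    using same_sign sheared_circle_iff[OF s cs] by blast
  also have "\<dots> \<longleftrightarrow> sqrt (x\<^sup>2 + y\<^sup>2) = c * x + s\<^sup>2 * R"
    by (rule sqrt_eq_iff_square[symmetric]) simp
  finally show ?thesis .
qed

theorem lemma6:
  fixes \<phi> M N :: real
  assumes "0 < \<phi>" and "\<phi> < pi" and "N > 0"
  shows "{(x3, y3). \<exists>(x1, y1) \<in> kepler_curve 0 M N.
            x1 = x3 - M * (cos \<phi> / sin \<phi>) * y3 - N * cos \<phi> \<and> y1 = (1 / sin \<phi>) * y3}
         = kepler_curve (cos \<phi>) (M * sin \<phi>) (N * (sin \<phi>)\<^sup>2)"
proof -
  let ?s = "sin \<phi>" and ?c = "cos \<phi>"
  have s: "?s \<noteq> 0"
    using assms sin_gt_zero by fastforce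
  have cs: "?c\<^sup>2 + ?s\<^sup>2 = 1"
    by (simp add: add.commute)
  have "sqrt ((x3 - M * (?c / ?s) * y3 - N * ?c)\<^sup>2 + ((1 / ?s) * y3)\<^sup>2) = M * ((1 / ?s) * y3) + N
      \<longleftrightarrow> sqrt (x3\<^sup>2 + y3\<^sup>2) = ?c * x3 + M * ?s * y3 + N * ?s\<^sup>2" for x3 y3
  proof -
    let ?R = "M * ((1 / ?s) * y3) + N"
    have x1: "x3 - M * (?c / ?s) * y3 - N * ?c = x3 - ?c * ?R"
      by (simp add: algebra_simps)
    have y1: "(1 / ?s) * y3 = y3 / ?s"
      by simp
    have rhs: "?c * x3 + M * ?s * y3 + N * ?s\<^sup>2 = ?c * x3 + ?s\<^sup>2 * ?R"
      using s by (simp add: field_simps power2_eq_square)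
    show ?thesis
      unfolding x1 rhs by (subst y1, rule sheared_distance_eq_iff[OF s cs])
  qed
  then show ?thesis
    unfolding kepler_curve_def by (auto simp del: One_nat_def)
qed

end
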